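(* Let $\Sigma=\{a,b\}$ and let $L_I:\Sigma^\omega\to\mathbb R$ be defined by $L_I(w)=1$ if $w$ contains infinitely many $a$'s and $L_I(w)=0$ otherwise. Then: (1) $L_I$ is not the language of any automaton in NLimAvg; (2) $L_I$ is not the language of any automaton in PosLimAvg; (3) $L_I$ is the language of some automaton in AsLimAvg.
   Context: A probabilistic weighted automaton over a finite alphabet $\Sigma$ is a tuple $A=(Q,\rho_I,\Sigma,\delta,\gamma)$ where $Q$ is a finite set of states, $\rho_I$ is a probability distribution on $Q$, $\delta:Q\times\Sigma\to\mathcal D(Q)$ assigns to each state and letter a probability distribution on $Q$, and $\gamma:Q\times\Sigma\times Q\to\mathbb Q$ is a weight function. A run over an infinite word $w=\sigma_1\sigma_2\dots$ is a sequence $r=q_0\sigma_1q_1\sigma_2\dots$ with $\rho_I(q_0)>0$ and $\delta(q_i,\sigma_{i+1})(q_{i+1})>0$ for all $i$; its weight sequence is $\gamma(r)=v_0v_1\dots$ with $v_i=\gamma(q_i,\sigma_{i+1},q_{i+1})$. For each $w$, the probabilities of finite run prefixes induce a probability measure $\mathbb P^A$ on runs over $w$. With $\mathsf{LimAvg}(v)=\liminf_{n}\frac1n\sum_{i=0}^{n-1}v_i$: PosLimAvg automata define $L^{>0}_A(w)=\sup\{\eta\mid \mathbb P^A(\{r:\mathsf{LimAvg}(\gamma(r))\ge\eta\})>0\}$; AsLimAvg automata define $L^{=1}_A(w)=\sup\{\eta\mid \mathbb P^A(\{r:\mathsf{LimAvg}(\gamma(r))\ge\eta\})=1\}$; NLimAvg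 automata (non-probabilistic: initial states with $\rho_I(q)>0$, transitions with $\delta(q,\sigma)(q')>0$) define $L^{\max}_A(w)=\sup\{\mathsf{LimAvg}(\gamma(r))\mid r\text{ run over }w\}$. *)

theory Defs
  imports "HOL-Probability.Probability"
begin

text \<open>The alphabet Sigma = {a, b}; infinite words are functions nat => sigma
  (letter sigma_{i+1} of the paper is w i).\<close>
datatype sigma = a | b

type_synonym word = "nat \<Rightarrow> sigma"

record pwa =
  pwa_states :: "nat set"
  pwa_init   :: "nat pmf"
  pwa_trans  :: "nat \<Rightarrow> sigma \<Rightarrow> nat pmf"
  pwa_weight :: "nat \<Rightarrow> sigma \<Rightarrow> nat \<Rightarrow> rat"

definition wf_pwa :: "pwa \<Rightarrow> bool" where
  "wf_pwa A \<longleftrightarrow> finite (pwa_states A) \<and> set_pmf (pwa_init A) \<subseteq> pwa_states A \<and>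
     (\<forall>q\<in>pwa_states A. \<forall>s. set_pmf (pwa_trans A q s) \<subseteq> pwa_states A)"

definition is_run :: "pwa \<Rightarrow> word \<Rightarrow> (nat \<Rightarrow> nat) \<Rightarrow> bool" where
  "is_run A w r \<longleftrightarrow> pmf (pwa_init A) (r 0) > 0 \<and>
     (\<forall>i. pmf (pwa_trans A (r i) (w i)) (r (Suc i)) > 0)"

definition weight_seq :: "pwa \<Rightarrow> word \<Rightarrow> (nat \<Rightarrow> nat) \<Rightarrow> nat \<Rightarrow> real" where
  "weight_seq A w r i = real_of_rat (pwa_weight A (r i) (w i) (r (Suc i)))"

definition LimAvg :: "(nat \<Rightarrow> real) \<Rightarrow> ereal" where
  "LimAvg v = liminf (\<lambda>n. ereal ((\<Sum>i<n. v i) / real n))"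

definition run_measure_spec :: "pwa \<Rightarrow> word \<Rightarrow> (nat \<Rightarrow> nat) measure \<Rightarrow> bool" where
  "run_measure_spec A w M \<longleftrightarrow> prob_space M \<and>
     sets M = sets (PiM (UNIV :: nat set) (\<lambda>_. count_space (UNIV :: nat set))) \<and>
     (\<forall>n (q :: nat \<Rightarrow> nat). emeasure M {r. \<forall>i\<le>n. r i = q i} =
        ennreal (pmf (pwa_init A) (q 0) *
                 (\<Prod>i<n. pmf (pwa_trans A (q i) (w i)) (q (Suc i)))))"

definition run_measure :: "pwa \<Rightarrow> word \<Rightarrow> (nat \<Rightarrow> nat) measure" where
  "run_measure A w = (THE M. run_measure_spec A w M)"

definition runs_ge :: "pwa \<Rightarrow> word \<Rightarrow> real \<Rightarrow> (nat \<Rightarrow> nat) set" where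
  "runs_ge A w \<eta> = {r. is_run A w r \<and> LimAvg (weight_seq A w r) \<ge> ereal \<eta>}"

definition L_pos :: "pwa \<Rightarrow> word \<Rightarrow> ereal" where
  "L_pos A w = Sup (ereal ` {\<eta>. measure (run_measure A w) (runs_ge A w \<eta>) > 0})"

definition L_as :: "pwa \<Rightarrow> word \<Rightarrow> ereal" where
  "L_as A w = Sup (ereal ` {\<eta>. measure (run_measure A w) (runs_ge A w \<eta>) = 1})"

definition L_max :: "pwa \<Rightarrow> word \<Rightarrow> ereal" where
  "L_max A w = Sup {LimAvg (weight_seq A w r) | r. is_run A w r}"

definition L_I :: "word \<Rightarrow> real" where
  "L_I w = (if infinite {i. w i = a} then 1 else 0)"

end

(*
  (1) NLimAvg: if an automaton computed L_I, every reachable cycle reading only b would have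
  non-positive weight, since pumping a positive one gives a word with finitely many a's and a
  run of positive limit average. Cutting out cycles, every b-path then weighs at most
  |Q| * max |weight|. On the word with a's exactly at the factorials, the block of b's between
  k! and (k+1)! therefore pushes the average of every run at time (k+1)! down to O(1/k).

  (2) PosLimAvg: on a word with finitely many a's, almost every run has average below 1/2 at
  arbitrarily late times, so with probability close to 1 already before some finite horizon.
  Placing each next a beyond such a horizon (with tolerance 1/(k+1) at step k) produces a word
  with infinitely many a's, yet almost every run on it has average below 1/2 infinitely often.

  (3) AsLimAvg: an automaton that stays in a weight-0 state and on every a jumps with
  probability 1/2 into an absorbing weight-1 state reaches it almost surely iff the word has
  infinitely many a's, and otherwise never leaves with positive probability.
*)

theory Submission
  imports Defs
begin

section \<open>The probability measure on runs\<close>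

abbreviation path_space :: "(nat \<Rightarrow> nat) measure" where
  "path_space \<equiv> PiM UNIV (\<lambda>_. count_space UNIV)"

lemma space_path_space: "space path_space = UNIV"
  by (simp add: space_PiM)

lemma sets_prefix_cylinder: "{r. \<forall>i\<le>n. r i = q i} \<in> sets path_space"
proof -
  have "{r. \<forall>i\<le>n. r i = q i} = (\<Inter>i\<in>{..n}. {r \<in> space path_space. r i \<in> {q i}})"
    by (auto simp: space_path_space)
  also have "\<dots> \<in> sets path_space"
    by (intro sets.finite_INT) (auto intro!: sets_Collect_single)
  finally show ?thesis .
qed

definition run_prefix :: "nat \<Rightarrow> (nat \<Rightarrow> nat) \<Rightarrow> nat list" where
  "run_prefix n r = map r [0..<Suc n]"

lemma run_prefix_eq_iff: "run_prefix n r = run_prefix n r' \<longleftrightarrow> (\<forall>i\<le>n. r i = r' i)"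
  unfolding run_prefix_def by (auto simp: map_eq_conv less_Suc_eq_le)

lemma run_prefix_eq_list_iff:
  "run_prefix n r = l \<longleftrightarrow> length l = Suc n \<and> (\<forall>i\<le>n. r i = l ! i)"
  unfolding run_prefix_def list_eq_iff_nth_eq
  by (auto simp del: upt_Suc simp: less_Suc_eq_le nth_map_upt)

lemma vimage_run_prefix_singleton:
  "run_prefix n -` {l} = (if length l = Suc n then {r. \<forall>i\<le>n. r i = l ! i} else {})"
  using run_prefix_eq_list_iff by auto

lemma measurable_run_prefix:
  "sets M = sets path_space \<Longrightarrow> run_prefix n \<in> M \<rightarrow>\<^sub>M count_space UNIV"
  by (subst measurable_count_space_eq2_countable)
     (simp add: sets_eq_imp_space_eq[of M path_space] space_path_space
       vimage_run_prefix_singleton sets_prefix_cylinder)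

definition prefix_determined :: "nat \<Rightarrow> (nat \<Rightarrow> nat) set \<Rightarrow> bool" where
  "prefix_determined n S \<longleftrightarrow> (\<forall>r r'. (\<forall>i\<le>n. r i = r' i) \<longrightarrow> (r \<in> S \<longleftrightarrow> r' \<in> S))"

lemma prefix_determined_vimage:
  "prefix_determined n S \<Longrightarrow> S = run_prefix n -` (run_prefix n ` S)"
  unfolding prefix_determined_def run_prefix_eq_iff[symmetric] by blast

lemma sets_prefix_determined:
  assumes "sets M = sets path_space" "prefix_determined n S"
  shows "S \<in> sets M"
proof -
  have "run_prefix n -` (run_prefix n ` S) \<inter> space M \<in> sets M"
    using measurable_run_prefix[OF assms(1)] by (rule measurable_sets) simp
  then show ?thesis
    using prefix_determined_vimage[OF assms(2)] sets_eq_imp_space_eq[OF assms(1)]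
    by (simp add: space_path_space)
qed

lemma measurable_prefix_determined:
  assumes "sets M = sets path_space"
    and "\<And>r r'. \<forall>i\<le>n. r i = r' i \<Longrightarrow> f r = f r'"
    and "\<And>r. f r \<in> space N"
  shows "f \<in> M \<rightarrow>\<^sub>M N"
proof -
  define extend :: "nat list \<Rightarrow> nat \<Rightarrow> nat" where
    "extend l i = (if i < length l then l ! i else 0)" for l i
  have "\<forall>i\<le>n. extend (run_prefix n r) i = r i" for r
    by (auto simp: extend_def run_prefix_def nth_map_upt simp del: upt_Suc)
  then have "f = (\<lambda>l. f (extend l)) \<circ> run_prefix n"
    using assms(2) by (auto simp: fun_eq_iff)
  moreover have "(\<lambda>l. f (extend l)) \<in> count_space UNIV \<rightarrow>\<^sub>M N"
    using assms(3) by (simp add: measurable_count_space_eq1)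
  ultimately show ?thesis
    using measurable_comp[OF measurable_run_prefix[OF assms(1)]] by metis
qed

definition prefix_prob :: "pwa \<Rightarrow> word \<Rightarrow> nat \<Rightarrow> (nat \<Rightarrow> nat) \<Rightarrow> real" where
  "prefix_prob A w n q =
     pmf (pwa_init A) (q 0) * (\<Prod>i<n. pmf (pwa_trans A (q i) (w i)) (q (Suc i)))"

lemma prefix_prob_cong: "\<forall>i\<le>n. q i = q' i \<Longrightarrow> prefix_prob A w n q = prefix_prob A w n q'"
  unfolding prefix_prob_def by (auto intro!: prod.cong)

lemma prefix_prob_word_cong:
  "\<forall>i<n. w i = w' i \<Longrightarrow> prefix_prob A w n q = prefix_prob A w' n q"
  unfolding prefix_prob_def by (auto intro!: prod.cong)

lemma run_measure_spec_sets: "run_measure_spec A w M \<Longrightarrow> sets M = sets path_space"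
  unfolding run_measure_spec_def by blast

lemma run_measure_spec_space: "run_measure_spec A w M \<Longrightarrow> space M = UNIV"
  using sets_eq_imp_space_eq[OF run_measure_spec_sets] space_path_space by metis

lemma run_measure_spec_cylinder:
  "run_measure_spec A w M \<Longrightarrow> emeasure M {r. \<forall>i\<le>n. r i = q i} = prefix_prob A w n q"
  unfolding run_measure_spec_def prefix_prob_def by blast

lemma emeasure_distr_run_prefix_singleton:
  assumes "run_measure_spec A w M"
  shows "emeasure (distr M (count_space UNIV) (run_prefix n)) {l} =
     (if length l = Suc n then ennreal (prefix_prob A w n (\<lambda>i. l ! i)) else 0)"
  using run_measure_spec_cylinder[OF assms, of n "\<lambda>i. l ! i"]
  by (simp add: emeasure_distr measurable_run_prefix[OF run_measure_spec_sets[OF assms]]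
      run_measure_spec_space[OF assms] vimage_run_prefix_singleton)

lemma emeasure_prefix_determined:
  assumes "run_measure_spec A w M" "prefix_determined n S"
  shows "emeasure M S = emeasure (distr M (count_space UNIV) (run_prefix n)) (run_prefix n ` S)"
  using prefix_determined_vimage[OF assms(2)] run_measure_spec_space[OF assms(1)]
  by (subst emeasure_distr[OF measurable_run_prefix[OF run_measure_spec_sets[OF assms(1)]]]) auto

lemma emeasure_prefix_determined_eq:
  assumes M: "run_measure_spec A w M" and M': "run_measure_spec A w' M'"
    and "\<forall>i<n. w i = w' i" and S: "prefix_determined n S"
  shows "emeasure M S = emeasure M' S"
proof -
  have "distr M (count_space UNIV) (run_prefix n) = distr M' (count_space UNIV) (run_prefix n)"
    by (rule measure_eqI_countable[where A = UNIV])
       (auto simp: emeasure_distr_run_prefix_singleton[OF M]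
         emeasure_distr_run_prefix_singleton[OF M'] prefix_prob_word_cong[OF assms(3)])
  then show ?thesis
    using emeasure_prefix_determined[OF M S] emeasure_prefix_determined[OF M' S] by simp
qed

lemma emeasure_prefix_determined_null:
  assumes M: "run_measure_spec A w M" and S: "prefix_determined n S"
    and null: "\<And>r. r \<in> S \<Longrightarrow> prefix_prob A w n r = 0"
  shows "emeasure M S = 0"
proof -
  let ?D = "distr M (count_space UNIV) (run_prefix n)"
  have "(\<Union>l\<in>run_prefix n ` S. {l}) \<in> null_sets ?D"
  proof (rule null_sets_UN')
    fix l assume "l \<in> run_prefix n ` S"
    then obtain r where r: "r \<in> S" "run_prefix n r = l" by auto
    then have "length l = Suc n" "\<forall>i\<le>n. r i = l ! i"
      using run_prefix_eq_list_iff by auto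
    then have "emeasure ?D {l} = 0"
      using emeasure_distr_run_prefix_singleton[OF M, of n l] null[OF r(1)]
        prefix_prob_cong[of n r "\<lambda>i. l ! i" A w]
      by simp
    then show "{l} \<in> null_sets ?D" by auto
  qed (rule countableI_type)
  then show ?thesis
    using emeasure_prefix_determined[OF M S] by auto
qed

text \<open>\<open>run_measure\<close> is a definite description, so its specification has to be shown to
  have exactly one solution.\<close>

lemma run_measure_spec_unique:
  assumes M: "run_measure_spec A w M" and M': "run_measure_spec A w M'"
  shows "M = M'"
proof (rule measure_eqI_PiM_infinite[where I = UNIV and M = "\<lambda>_. count_space UNIV"])
  show "sets M = sets path_space" "sets M' = sets path_space"
    using M M' by (simp_all add: run_measure_spec_sets)
  show "finite_measure M"
    using M unfolding run_measure_spec_def by (auto intro: prob_space.finite_measure)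
  fix X :: "nat \<Rightarrow> nat set" and J :: "nat set" assume J: "finite J"
  let ?E = "prod_emb UNIV (\<lambda>_. count_space UNIV) J (Pi\<^sub>E J X)"
  have "?E = {r. \<forall>i\<in>J. r i \<in> X i}"
    by (auto simp: prod_emb_def space_path_space PiE_iff)
  moreover have "prefix_determined (Max (insert 0 J)) {r. \<forall>i\<in>J. r i \<in> X i}"
    using J by (auto simp: prefix_determined_def)
  ultimately show "emeasure M ?E = emeasure M' ?E"
    using emeasure_prefix_determined_eq[OF M M'] by simp
qed

text \<open>Existence: a run is sampled from independent choices, \<open>\<omega> None\<close> being the initial
  state and \<open>\<omega> (Some (i, q))\<close> the successor of \<open>q\<close> at time \<open>i\<close>.\<close>

primrec trajectory :: "((nat \<times> nat) option \<Rightarrow> nat) \<Rightarrow> nat \<Rightarrow> nat" where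
  "trajectory \<omega> 0 = \<omega> None"
| "trajectory \<omega> (Suc i) = \<omega> (Some (i, trajectory \<omega> i))"

definition choice_measure :: "pwa \<Rightarrow> word \<Rightarrow> (nat \<times> nat) option \<Rightarrow> nat measure" where
  "choice_measure A w j = measure_pmf
     (case j of None \<Rightarrow> pwa_init A | Some (i, q) \<Rightarrow> pwa_trans A q (w i))"

lemma trajectory_prefix_iff:
  "(\<forall>i\<le>n. trajectory \<omega> i = q i) \<longleftrightarrow>
     \<omega> None = q 0 \<and> (\<forall>i<n. \<omega> (Some (i, q i)) = q (Suc i))"
proof (induction n)
  case (Suc n)
  have "(\<forall>i\<le>Suc n. trajectory \<omega> i = q i) \<longleftrightarrow>
      (\<forall>i\<le>n. trajectory \<omega> i = q i) \<and> trajectory \<omega> (Suc n) = q (Suc n)"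
    by (auto simp: le_Suc_eq)
  with Suc show ?case
    by (auto simp: less_Suc_eq)
qed simp

lemma sets_choice_measure: "sets (choice_measure A w j) = sets (count_space UNIV)"
  by (simp add: choice_measure_def)

lemma measurable_choice_component:
  "(\<lambda>\<omega>. \<omega> j) \<in> PiM UNIV (choice_measure A w) \<rightarrow>\<^sub>M count_space UNIV"
  using measurable_component_singleton[of j UNIV "choice_measure A w"]
    measurable_cong_sets[OF refl sets_choice_measure, of "PiM UNIV (choice_measure A w)" A w j]
  by simp

lemma measurable_trajectory:
  "(\<lambda>\<omega>. trajectory \<omega> i) \<in> PiM UNIV (choice_measure A w) \<rightarrow>\<^sub>M count_space UNIV"
proof (induction i)
  case (Suc i)
  have "(\<lambda>\<omega>. (\<lambda>q \<omega>. \<omega> (Some (i, q))) (trajectory \<omega> i) \<omega>)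
      \<in> PiM UNIV (choice_measure A w) \<rightarrow>\<^sub>M count_space UNIV"
    by (rule measurable_compose_countable[OF measurable_choice_component Suc])
  then show ?case by simp
qed (simp add: measurable_choice_component)

lemma run_measure_spec_exists: "\<exists>M. run_measure_spec A w M"
proof -
  let ?\<Omega> = "PiM UNIV (choice_measure A w)"
  have meas: "trajectory \<in> ?\<Omega> \<rightarrow>\<^sub>M path_space"
    by (rule measurable_PiM_single') (auto simp: measurable_trajectory space_PiM)
  have "prob_space ?\<Omega>"
    by (rule prob_space_PiM) (simp add: choice_measure_def prob_space_measure_pmf)
  let ?M = "distr ?\<Omega> path_space trajectory"
  have "run_measure_spec A w ?M"
    unfolding run_measure_spec_def
  proof (intro conjI allI)
    show "prob_space ?M"
      using \<open>prob_space ?\<Omega>\<close> meas by (rule prob_space.prob_space_distr)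
    fix n and q :: "nat \<Rightarrow> nat"
    define J where "J = insert None ((\<lambda>i. Some (i, q i)) ` {..<n})"
    define X where "X j = (case j of None \<Rightarrow> {q 0} | Some (i, _) \<Rightarrow> {q (Suc i)})"
      for j :: "(nat \<times> nat) option"
    have "trajectory -` {r. \<forall>i\<le>n. r i = q i} \<inter> space ?\<Omega> =
        prod_emb UNIV (choice_measure A w) J (Pi\<^sub>E J X)"
      by (auto simp: prod_emb_def PiE_iff trajectory_prefix_iff J_def X_def space_PiM
          choice_measure_def)
    then have "emeasure ?M {r. \<forall>i\<le>n. r i = q i} =
        emeasure ?\<Omega> (prod_emb UNIV (choice_measure A w) J (Pi\<^sub>E J X))"
      by (simp add: emeasure_distr[OF meas sets_prefix_cylinder])
    also have "\<dots> = (\<Prod>j\<in>J. emeasure (choice_measure A w j) (X j))"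
      by (rule emeasure_PiM_emb) (auto simp: choice_measure_def prob_space_measure_pmf J_def)
    also have "\<dots> = emeasure (choice_measure A w None) (X None) *
        (\<Prod>j\<in>(\<lambda>i. Some (i, q i)) ` {..<n}. emeasure (choice_measure A w j) (X j))"
      unfolding J_def by (subst prod.insert) auto
    also have "\<dots> = ennreal (pmf (pwa_init A) (q 0)) *
        (\<Prod>i<n. ennreal (pmf (pwa_trans A (q i) (w i)) (q (Suc i))))"
      by (subst prod.reindex) (auto simp: inj_on_def X_def choice_measure_def emeasure_pmf_single)
    also have "\<dots> = ennreal (pmf (pwa_init A) (q 0) *
        (\<Prod>i<n. pmf (pwa_trans A (q i) (w i)) (q (Suc i))))"
      by (simp add: prod_ennreal ennreal_mult' prod_nonneg)
    finally show "emeasure ?M {r. \<forall>i\<le>n. r i = q i} = ennreal (pmf (pwa_init A) (q 0) *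
        (\<Prod>i<n. pmf (pwa_trans A (q i) (w i)) (q (Suc i))))" .
  qed simp
  then show ?thesis by blast
qed

lemma run_measure_spec_run_measure: "run_measure_spec A w (run_measure A w)"
  unfolding run_measure_def
  using run_measure_spec_exists run_measure_spec_unique by (metis theI)

lemma prob_space_run_measure: "prob_space (run_measure A w)"
  using run_measure_spec_run_measure unfolding run_measure_spec_def by blast

lemma sets_run_measure: "sets (run_measure A w) = sets path_space"
  using run_measure_spec_run_measure by (rule run_measure_spec_sets)

lemma space_run_measure: "space (run_measure A w) = UNIV"
  using run_measure_spec_run_measure by (rule run_measure_spec_space)

lemma emeasure_run_measure_cylinder:
  "emeasure (run_measure A w) {r. \<forall>i\<le>n. r i = q i} = prefix_prob A w n q"
  using run_measure_spec_run_measure by (rule run_measure_spec_cylinder)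

lemma measure_run_measure_prefix_determined_eq:
  "\<forall>i<n. w i = w' i \<Longrightarrow> prefix_determined n S \<Longrightarrow>
    measure (run_measure A w) S = measure (run_measure A w') S"
  using emeasure_prefix_determined_eq[OF run_measure_spec_run_measure run_measure_spec_run_measure]
  by (simp add: measure_def)

lemma is_run_set_pmf:
  assumes "is_run A w r"
  shows "r 0 \<in> set_pmf (pwa_init A)" "r (Suc i) \<in> set_pmf (pwa_trans A (r i) (w i))"
  using assms by (simp_all add: is_run_def set_pmf_eq')

lemma prefix_determined_step: "prefix_determined (Suc i) {r. P (r i) (r (Suc i))}"
  by (simp add: prefix_determined_def)

lemma sets_runs: "{r. is_run A w r} \<in> sets (run_measure A w)"
proof -
  have "{r. is_run A w r} = {r. pmf (pwa_init A) (r 0) > 0} \<inter>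
      (\<Inter>i. {r. pmf (pwa_trans A (r i) (w i)) (r (Suc i)) > 0})"
    by (auto simp: is_run_def)
  moreover have "{r. pmf (pwa_init A) (r 0) > 0} \<in> sets (run_measure A w)"
    by (rule sets_prefix_determined[OF sets_run_measure, of 0]) (simp add: prefix_determined_def)
  moreover have "{r. pmf (pwa_trans A (r i) (w i)) (r (Suc i)) > 0} \<in> sets (run_measure A w)"
    for i by (rule sets_prefix_determined[OF sets_run_measure prefix_determined_step])
  ultimately show ?thesis by auto
qed

lemma AE_is_run: "AE r in run_measure A w. is_run A w r"
proof -
  let ?M = "run_measure A w"
  have "{r. pmf (pwa_init A) (r 0) = 0} \<in> null_sets ?M"
  proof
    have "prefix_determined 0 {r. pmf (pwa_init A) (r 0) = 0}"
      by (simp add: prefix_determined_def)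
    then show "{r. pmf (pwa_init A) (r 0) = 0} \<in> sets ?M"
      "emeasure ?M {r. pmf (pwa_init A) (r 0) = 0} = 0"
      by (auto intro!: sets_prefix_determined[OF sets_run_measure]
          emeasure_prefix_determined_null[OF run_measure_spec_run_measure] simp: prefix_prob_def)
  qed
  moreover have "{r. pmf (pwa_trans A (r i) (w i)) (r (Suc i)) = 0} \<in> null_sets ?M" for i
  proof
    show "{r. pmf (pwa_trans A (r i) (w i)) (r (Suc i)) = 0} \<in> sets ?M"
      "emeasure ?M {r. pmf (pwa_trans A (r i) (w i)) (r (Suc i)) = 0} = 0"
      by (auto intro!: sets_prefix_determined[OF sets_run_measure prefix_determined_step]
          emeasure_prefix_determined_null[OF run_measure_spec_run_measure prefix_determined_step]
          simp: prefix_prob_def)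
  qed
  ultimately have "{r. pmf (pwa_init A) (r 0) = 0} \<union>
      (\<Union>i. {r. pmf (pwa_trans A (r i) (w i)) (r (Suc i)) = 0}) \<in> null_sets ?M"
    by blast
  then show ?thesis
    by (rule AE_I') (auto simp: is_run_def space_run_measure order_less_le)
qed

interpretation run_measure: prob_space "run_measure A w" for A w
  by (rule prob_space_run_measure)

section \<open>Limit averages\<close>

definition avg :: "(nat \<Rightarrow> real) \<Rightarrow> nat \<Rightarrow> real" where
  "avg v n = (\<Sum>i<n. v i) / real n"

lemma LimAvg_eq_liminf_avg: "LimAvg v = liminf (\<lambda>n. ereal (avg v n))"
  unfolding LimAvg_def avg_def ..

lemma avg_weight_seq_cong:
  assumes "\<forall>i\<le>n. r i = r' i" "\<forall>i<n. w i = w' i"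
  shows "avg (weight_seq A w r) n = avg (weight_seq A w' r') n"
  using assms unfolding avg_def weight_seq_def by (auto intro!: sum.cong)

lemma borel_measurable_LimAvg:
  "(\<lambda>r. LimAvg (weight_seq A w r)) \<in> borel_measurable (run_measure A w)"
proof -
  have "(\<lambda>r. ereal (avg (weight_seq A w r) n)) \<in> borel_measurable (run_measure A w)" for n
    by (rule measurable_prefix_determined[OF sets_run_measure, of n])
       (auto dest: avg_weight_seq_cong)
  then show ?thesis
    unfolding LimAvg_eq_liminf_avg by (rule borel_measurable_liminf)
qed

lemma sets_runs_ge: "runs_ge A w \<eta> \<in> sets (run_measure A w)"
proof -
  let ?M = "run_measure A w"
  have "{r \<in> space ?M. ereal \<eta> \<le> LimAvg (weight_seq A w r)} \<in> sets ?M"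
    using borel_measurable_LimAvg by measurable
  moreover have "runs_ge A w \<eta> =
      {r. is_run A w r} \<inter> {r \<in> space ?M. ereal \<eta> \<le> LimAvg (weight_seq A w r)}"
    by (auto simp: runs_ge_def space_run_measure)
  ultimately show ?thesis
    using sets_runs by simp
qed

lemma LimAvg_eventually_const:
  assumes "\<And>i. p \<le> i \<Longrightarrow> v i = c"
  shows "LimAvg v = ereal c"
proof -
  define K where "K = (\<Sum>i<p. v i - c)"
  have "avg v n = K / real n + c" if "p < n" for n
  proof -
    have "(\<Sum>i<n. v i - c) = K"
      unfolding K_def using that assms by (intro sum.mono_neutral_right) auto
    then have "(\<Sum>i<n. v i) = K + real n * c"
      by (simp add: sum_subtractf)
    with that show ?thesis
      by (simp add: avg_def field_simps)
  qed
  then have "\<forall>\<^sub>F n in sequentially. K / real n + c = avg v n"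
    by (auto simp: eventually_sequentially intro!: exI[of _ "Suc p"])
  moreover have "(\<lambda>n. K / real n + c) \<longlonglongrightarrow> 0 + c"
    by (intro tendsto_add lim_const_over_n tendsto_const)
  ultimately have "(\<lambda>n. avg v n) \<longlonglongrightarrow> c"
    using Lim_transform_eventually by fastforce
  then show ?thesis
    unfolding LimAvg_eq_liminf_avg by (intro lim_imp_Liminf tendsto_ereal) simp_all
qed

lemma sum_mod_period:
  fixes g :: "nat \<Rightarrow> real"
  shows "(\<Sum>k<q * L. g (k mod L)) = real q * (\<Sum>j<L. g j)"
proof (induction q)
  case (Suc q)
  have "(\<Sum>k<Suc q * L. g (k mod L)) =
      (\<Sum>k\<in>{0..<q * L}. g (k mod L)) + (\<Sum>k\<in>{q * L..<q * L + L}. g (k mod L))"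
    by (simp add: lessThan_atLeast0 sum.atLeastLessThan_concat add.commute)
  also have "(\<Sum>k\<in>{q * L..<q * L + L}. g (k mod L)) =
      (\<Sum>j\<in>{0..<L}. g ((j + q * L) mod L))"
    using sum.shift_bounds_nat_ivl[of "\<lambda>k. g (k mod L)" 0 "q * L" L] by (simp add: add.commute)
  also have "\<dots> = (\<Sum>j<L. g j)"
    by (simp add: lessThan_atLeast0)
  finally show ?case
    using Suc by (simp add: lessThan_atLeast0 algebra_simps)
qed simp

lemma sum_mod_period_ge:
  fixes g :: "nat \<Rightarrow> real"
  assumes "0 < L"
  shows "real m * (\<Sum>j<L. g j) / real L - (\<Sum>j<L. \<bar>g j\<bar>) - \<bar>\<Sum>j<L. g j\<bar>
    \<le> (\<Sum>k<m. g (k mod L))"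
proof -
  let ?q = "m div L" and ?r = "m mod L" and ?S = "\<Sum>j<L. g j"
  have "(\<Sum>k<m. g (k mod L)) =
      (\<Sum>k\<in>{0..<?q * L}. g (k mod L)) + (\<Sum>k\<in>{?q * L..<?q * L + ?r}. g (k mod L))"
    by (subst div_mult_mod_eq[of m L, symmetric], subst lessThan_atLeast0,
        rule sum.atLeastLessThan_concat[symmetric]) auto
  also have "(\<Sum>k\<in>{?q * L..<?q * L + ?r}. g (k mod L)) =
      (\<Sum>j\<in>{0..<?r}. g ((j + ?q * L) mod L))"
    using sum.shift_bounds_nat_ivl[of "\<lambda>k. g (k mod L)" 0 "?q * L" ?r] by simp
  also have "\<dots> = (\<Sum>j\<in>{0..<?r}. g j)"
  proof (intro sum.cong refl)
    fix j assume "j \<in> {0..<?r}"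
    then have "j < L"
      using mod_less_divisor[OF assms, of m] by simp
    then show "g ((j + ?q * L) mod L) = g j"
      by simp
  qed
  also have "(\<Sum>k\<in>{0..<?q * L}. g (k mod L)) = real ?q * ?S"
    using sum_mod_period[where g = g and q = ?q and L = L] by (simp add: lessThan_atLeast0)
  finally have split: "(\<Sum>k<m. g (k mod L)) = real ?q * ?S + (\<Sum>j\<in>{0..<?r}. g j)" .
  have "- (\<Sum>j<L. \<bar>g j\<bar>) \<le> (\<Sum>j\<in>{0..<?r}. g j)"
  proof -
    have "(\<Sum>j\<in>{0..<?r}. \<bar>g j\<bar>) \<le> (\<Sum>j<L. \<bar>g j\<bar>)"
      using assms by (intro sum_mono2) (auto simp: lessThan_atLeast0)
    then show ?thesis
      using sum_abs[of g "{0..<?r}"] by linarith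
  qed
  moreover have "real m * ?S / real L - \<bar>?S\<bar> \<le> real ?q * ?S"
  proof -
    have m: "real m = real ?q * real L + real ?r"
      by (metis div_mult_mod_eq of_nat_add of_nat_mult)
    have "real ?r < real L"
      using assms by simp
    then have lo: "real m / real L - 1 \<le> real ?q" and hi: "real ?q \<le> real m / real L"
      using assms by (simp_all add: m field_simps)
    show ?thesis
    proof (cases "0 \<le> ?S")
      case True
      have "(real m / real L - 1) * ?S \<le> real ?q * ?S"
        using lo True by (rule mult_right_mono)
      with True show ?thesis
        by (simp add: left_diff_distrib)
    next
      case False
      have "real m / real L * ?S \<le> real ?q * ?S"
        using hi False by (intro mult_right_mono_neg) auto
      then show ?thesis
        by simp
    qed
  qed
  ultimately show ?thesis
    using split by linarith
qed

lemma LimAvg_ge_eventually_periodic: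
  fixes g :: "nat \<Rightarrow> real"
  assumes L: "0 < L" and v: "\<And>k. v (n + k) = g (k mod L)"
  shows "ereal ((\<Sum>j<L. g j) / real L) \<le> LimAvg v"
proof -
  define S where "S = (\<Sum>j<L. g j)"
  define K where "K = (\<Sum>i<n. v i) - (\<Sum>j<L. \<bar>g j\<bar>) - \<bar>S\<bar> - real n * S / real L"
  have "K / real N + S / real L \<le> avg v N" if "n < N" for N
  proof -
    obtain m where N: "N = n + m"
      using \<open>n < N\<close> less_imp_add_positive by blast
    have tail: "(\<Sum>i\<in>{n..<n + m}. v i) = (\<Sum>k\<in>{0..<m}. v (n + k))"
      using sum.shift_bounds_nat_ivl[of v 0 n m] by (simp add: add.commute)
    have "(\<Sum>i<N. v i) = (\<Sum>i<n. v i) + (\<Sum>k<m. g (k mod L))"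
      unfolding N lessThan_atLeast0
      by (subst sum.atLeastLessThan_concat[of 0 n "n + m", symmetric]) (simp_all add: tail v)
    also have "\<dots> \<ge> K + real N * S / real L"
    proof -
      have "real N * S / real L = real n * S / real L + real m * S / real L"
        by (simp add: N add_divide_distrib distrib_right)
      then show ?thesis
        using sum_mod_period_ge[OF L, of m g] unfolding K_def S_def by linarith
    qed
    finally have sum_ge: "K + real N * S / real L \<le> (\<Sum>i<N. v i)" .
    have "K / real N + S / real L = (K + real N * S / real L) / real N"
      using that by (simp add: field_simps)
    also have "\<dots> \<le> (\<Sum>i<N. v i) / real N"
      using sum_ge by (rule divide_right_mono) simp
    finally show ?thesis
      by (simp add: avg_def)
  qed
  then have "\<forall>\<^sub>F N in sequentially. ereal (K / real N + S / real L) \<le> ereal (avg v N)"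
    by (auto simp: eventually_sequentially intro!: exI[of _ "Suc n"])
  then have "liminf (\<lambda>N. ereal (K / real N + S / real L)) \<le> LimAvg v"
    unfolding LimAvg_eq_liminf_avg by (rule Liminf_mono)
  moreover have "(\<lambda>N. ereal (K / real N + S / real L)) \<longlonglongrightarrow> ereal (0 + S / real L)"
    by (intro tendsto_ereal tendsto_add lim_const_over_n tendsto_const)
  then have "liminf (\<lambda>N. ereal (K / real N + S / real L)) = ereal (S / real L)"
    by (intro lim_imp_Liminf) simp_all
  ultimately show ?thesis
    by (simp add: S_def)
qed

definition word_of_set :: "nat set \<Rightarrow> word" where
  "word_of_set S i = (if i \<in> S then a else b)"

lemma L_I_word_of_set: "L_I (word_of_set S) = (if finite S then 0 else 1)"
proof -
  have "{i. word_of_set S i = a} = S"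
    by (auto simp: word_of_set_def)
  then show ?thesis
    by (simp add: L_I_def)
qed

section \<open>No PosLimAvg automaton computes \<open>L_I\<close>\<close>

lemma measure_runs_ge_eq_0:
  assumes "L_pos A w < ereal \<eta>"
  shows "measure (run_measure A w) (runs_ge A w \<eta>) = 0"
proof (rule ccontr)
  assume "measure (run_measure A w) (runs_ge A w \<eta>) \<noteq> 0"
  then have "ereal \<eta> \<le> L_pos A w"
    unfolding L_pos_def by (intro Sup_upper) (simp add: zero_less_measure_iff)
  with assms show False by simp
qed

lemma less_L_posE:
  assumes "ereal c < L_pos A w"
  obtains \<eta> where "c < \<eta>" "measure (run_measure A w) (runs_ge A w \<eta>) > 0"
  using assms unfolding L_pos_def less_Sup_iff by auto

definition low_avg_runs :: "pwa \<Rightarrow> word \<Rightarrow> real \<Rightarrow> nat \<Rightarrow> nat \<Rightarrow> (nat \<Rightarrow> nat) set" where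
  "low_avg_runs A w c N H = {r. \<exists>T. N \<le> T \<and> T \<le> H \<and> avg (weight_seq A w r) T < c}"

lemma low_avg_runs_cong:
  assumes "\<forall>i\<le>H. r i = r' i" "\<forall>i<H. w i = w' i"
  shows "r \<in> low_avg_runs A w c N H \<longleftrightarrow> r' \<in> low_avg_runs A w' c N H"
proof -
  have "avg (weight_seq A w r) T = avg (weight_seq A w' r') T" if "T \<le> H" for T
    using assms that by (intro avg_weight_seq_cong) auto
  then show ?thesis
    unfolding low_avg_runs_def by auto
qed

lemma prefix_determined_low_avg_runs: "prefix_determined H (low_avg_runs A w c N H)"
  unfolding prefix_determined_def using low_avg_runs_cong[of H _ _ w w] by blast

lemma sets_low_avg_runs: "low_avg_runs A w c N H \<in> sets (run_measure A w)"
  by (rule sets_prefix_determined[OF sets_run_measure prefix_determined_low_avg_runs])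

lemma measure_low_avg_runs_word_cong:
  assumes "\<forall>i<H. w i = w' i"
  shows "measure (run_measure A w) (low_avg_runs A w c N H) =
    measure (run_measure A w') (low_avg_runs A w' c N H)"
proof -
  have "low_avg_runs A w c N H = low_avg_runs A w' c N H"
    using low_avg_runs_cong[OF _ assms] by blast
  then show ?thesis
    using measure_run_measure_prefix_determined_eq[OF assms prefix_determined_low_avg_runs]
    by simp
qed

lemma low_avg_runs_tendsto_1:
  assumes "L_pos A w < ereal c"
  shows "(\<lambda>H. measure (run_measure A w) (low_avg_runs A w c N H)) \<longlonglongrightarrow> 1"
proof -
  let ?M = "run_measure A w" and ?D = "low_avg_runs A w c N"
  have "AE r in ?M. r \<notin> runs_ge A w c"
    using run_measure.prob_eq_0[OF sets_runs_ge] measure_runs_ge_eq_0[OF assms] by blast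
  then have "AE r in ?M. r \<in> (\<Union>H. ?D H)"
    using AE_is_run
  proof eventually_elim
    case (elim r)
    show ?case
    proof (rule ccontr)
      assume "r \<notin> (\<Union>H. ?D H)"
      then have "\<forall>T\<ge>N. c \<le> avg (weight_seq A w r) T"
        by (auto simp: low_avg_runs_def not_less)
      then have "ereal c \<le> LimAvg (weight_seq A w r)"
        unfolding LimAvg_eq_liminf_avg
        by (intro Liminf_bounded) (auto simp: eventually_sequentially)
      with elim show False
        by (simp add: runs_ge_def)
    qed
  qed
  then have "measure ?M (\<Union>H. ?D H) = 1"
    by (subst run_measure.prob_eq_1) (auto intro: sets_low_avg_runs)
  moreover have "(\<lambda>H. measure ?M (?D H)) \<longlonglongrightarrow> measure ?M (\<Union>H. ?D H)"
  proof (rule run_measure.finite_Lim_measure_incseq)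
    show "incseq ?D"
      by (auto simp: incseq_def low_avg_runs_def)
  qed (auto intro: sets_low_avg_runs)
  ultimately show ?thesis by simp
qed

lemma low_avg_runs_horizon:
  assumes "L_pos A w < ereal c" "0 < \<epsilon>" "finite S"
  obtains H where "S \<subseteq> {..<H}" "1 - \<epsilon> < measure (run_measure A w) (low_avg_runs A w c N H)"
proof -
  obtain M where M: "S \<subseteq> {..<M}"
    using finite_nat_bounded[OF assms(3)] ..
  have "1 - \<epsilon> < 1"
    using assms(2) by simp
  then have "\<forall>\<^sub>F H in sequentially. 1 - \<epsilon> < measure (run_measure A w) (low_avg_runs A w c N H)"
    by (rule order_tendstoD(1)[OF low_avg_runs_tendsto_1[OF assms(1)]])
  then obtain H0 where "\<forall>H\<ge>H0. 1 - \<epsilon> < measure (run_measure A w) (low_avg_runs A w c N H)"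
    unfolding eventually_sequentially ..
  with M show ?thesis
    by (intro that[of "max M H0"]) auto
qed

lemma (in prob_space) AE_frequently_if_prob_tendsto_1:
  assumes "\<And>k. D k \<in> events" "(\<lambda>k. prob (D k)) \<longlonglongrightarrow> 1"
  shows "AE x in M. \<exists>\<^sub>F k in sequentially. x \<in> D k"
proof -
  have "(\<Inter>k\<in>{K..}. space M - D k) \<in> null_sets M" for K
  proof -
    have "(\<lambda>k. prob (space M - D k)) \<longlonglongrightarrow> 1 - 1"
      by (simp only: prob_compl[OF assms(1)]) (intro tendsto_diff tendsto_const assms(2))
    moreover have "\<forall>k\<ge>K. prob (\<Inter>k\<in>{K..}. space M - D k) \<le> prob (space M - D k)"
      using assms(1) by (auto intro!: finite_measure_mono)
    ultimately have "prob (\<Inter>k\<in>{K..}. space M - D k) \<le> 0"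
      using LIMSEQ_le_const[of "\<lambda>k. prob (space M - D k)" 0] by auto
    then show ?thesis
      using assms(1) by (auto simp: null_sets_def emeasure_eq_measure measure_le_0_iff
          intro!: sets.countable_INT')
  qed
  then have "(\<Union>K. \<Inter>k\<in>{K..}. space M - D k) \<in> null_sets M"
    by blast
  then show ?thesis
    by (rule AE_I') (auto simp: frequently_sequentially)
qed

lemma measure_runs_ge_eq_0_if_low_avg_tendsto_1:
  assumes "(\<lambda>k. measure (run_measure A w) (low_avg_runs A w c k (H k))) \<longlonglongrightarrow> 1" "c < \<eta>"
  shows "measure (run_measure A w) (runs_ge A w \<eta>) = 0"
proof -
  let ?D = "\<lambda>k. low_avg_runs A w c k (H k)"
  have "AE r in run_measure A w. \<exists>\<^sub>F k in sequentially. r \<in> ?D k"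
    using assms(1) by (intro run_measure.AE_frequently_if_prob_tendsto_1 sets_low_avg_runs)
  then have "AE r in run_measure A w. r \<notin> runs_ge A w \<eta>"
  proof eventually_elim
    case (elim r)
    show ?case
    proof
      assume "r \<in> runs_ge A w \<eta>"
      then have "ereal \<eta> \<le> liminf (\<lambda>n. ereal (avg (weight_seq A w r) n))"
        by (simp add: runs_ge_def LimAvg_eq_liminf_avg)
      moreover have "ereal c < ereal \<eta>"
        using assms(2) by simp
      ultimately have "ereal c < liminf (\<lambda>n. ereal (avg (weight_seq A w r) n))"
        by (rule less_le_trans[rotated])
      then have "\<forall>\<^sub>F n in sequentially. ereal c < ereal (avg (weight_seq A w r) n)"
        by (rule less_LiminfD)
      then obtain N where N: "\<forall>n\<ge>N. ereal c < ereal (avg (weight_seq A w r) n)"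
        unfolding eventually_sequentially ..
      have "r \<notin> ?D k" if "k \<ge> N" for k
      proof
        assume "r \<in> ?D k"
        then obtain T where "k \<le> T" "avg (weight_seq A w r) T < c"
          by (auto simp: low_avg_runs_def)
        with N[rule_format, OF order_trans[OF that \<open>k \<le> T\<close>]] show False
          by simp
      qed
      with elim show False
        by (auto simp: frequently_sequentially)
    qed
  qed
  then show ?thesis
    by (subst run_measure.prob_eq_0[OF sets_runs_ge])
qed

lemma tendsto_1_if_gt_1_minus_inverse:
  fixes f :: "nat \<Rightarrow> real"
  assumes "\<And>k. 1 - inverse (real (Suc k)) < f k" "\<And>k. f k \<le> 1"
  shows "f \<longlonglongrightarrow> 1"
proof (rule tendsto_sandwich[OF _ _ _ tendsto_const])
  show "(\<lambda>k. 1 - inverse (real (Suc k))) \<longlonglongrightarrow> (1::real)"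
    using tendsto_diff[OF tendsto_const LIMSEQ_inverse_real_of_nat, of 1] by simp
  show "\<forall>\<^sub>F k in sequentially. 1 - inverse (real (Suc k)) \<le> f k"
    using assms(1) by (intro always_eventually allI less_imp_le)
  show "\<forall>\<^sub>F k in sequentially. f k \<le> 1"
    using assms(2) by (intro always_eventually allI)
qed

lemma diagonal_sequence:
  fixes h :: "nat \<Rightarrow> nat set \<Rightarrow> nat"
  assumes h: "\<And>k S. finite S \<Longrightarrow> S \<subseteq> {..<h k S}"
  obtains p where "strict_mono p" "\<And>k. p k = h k (p ` {..<k})"
proof -
  define marks where "marks = rec_nat {} (\<lambda>k S. insert (h k S) S)"
  define p where "p k = h k (marks k)" for k
  have marks: "marks k = p ` {..<k}" for k
  proof (induction k)
    case (Suc k)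
    have "marks (Suc k) = insert (p k) (marks k)"
      by (simp add: marks_def p_def[of k])
    with Suc show ?case
      by (simp add: lessThan_Suc)
  qed (simp add: marks_def)
  have p_eq: "p k = h k (p ` {..<k})" for k
    by (simp only: p_def[of k] marks)
  have "p k < p (Suc k)" for k
  proof -
    have "p ` {..<Suc k} \<subseteq> {..<h (Suc k) (p ` {..<Suc k})}"
      by (rule h) simp
    then show ?thesis
      using p_eq[of "Suc k"] by auto
  qed
  then have "strict_mono p"
    by (simp add: strict_mono_Suc_iff)
  then show ?thesis
    using p_eq by (rule that)
qed

lemma word_of_set_range_eq_below:
  fixes p :: "nat \<Rightarrow> nat"
  assumes "strict_mono p" "i < p k"
  shows "word_of_set (range p) i = word_of_set (p ` {..<k}) i"
  using assms by (auto simp: word_of_set_def strict_mono_less[OF assms(1)])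

lemma L_I_not_PosLimAvg: "\<not> (\<exists>A. wf_pwa A \<and> (\<forall>w. L_pos A w = ereal (L_I w)))"
proof
  assume "\<exists>A. wf_pwa A \<and> (\<forall>w. L_pos A w = ereal (L_I w))"
  then obtain A where L: "\<And>w. L_pos A w = ereal (L_I w)" by blast
  let ?low = "\<lambda>w k H. measure (run_measure A w) (low_avg_runs A w (1/2) k H)"
  define good where "good k S H \<longleftrightarrow>
    S \<subseteq> {..<H} \<and> 1 - inverse (real (Suc k)) < ?low (word_of_set S) k H" for k S H
  have exists_good: "\<exists>H. good k S H" if fin: "finite S" for S k
  proof -
    have "L_pos A (word_of_set S) < ereal (1/2)"
      using L fin by (simp add: L_I_word_of_set)
    then obtain H where "S \<subseteq> {..<H}" "1 - inverse (real (Suc k)) < ?low (word_of_set S) k H"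
      by (rule low_avg_runs_horizon[where \<epsilon> = "inverse (real (Suc k))" and N = k and S = S])
         (simp_all add: fin)
    then show ?thesis
      unfolding good_def by blast
  qed
  define h where "h k S = (SOME H. good k S H)" for k S
  have h: "good k S (h k S)" if "finite S" for S k
    unfolding h_def using that by (rule someI_ex[OF exists_good])
  have h_bound: "S \<subseteq> {..<h k S}" if "finite S" for S k
    using h[OF that] unfolding good_def by blast
  obtain p where p: "strict_mono p" "\<And>k. p k = h k (p ` {..<k})"
    using diagonal_sequence[of h, OF h_bound] by blast
  define w where "w = word_of_set (range p)"
  have D_large: "1 - inverse (real (Suc k)) < ?low w k (p k)" for k
  proof -
    have "1 - inverse (real (Suc k)) < ?low (word_of_set (p ` {..<k})) k (p k)"
      using h[of "p ` {..<k}" k] unfolding good_def p(2)[symmetric] by blast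
    also have "\<dots> = ?low w k (p k)"
      unfolding w_def
      by (rule measure_low_avg_runs_word_cong) (simp add: word_of_set_range_eq_below[OF p(1)])
    finally show ?thesis .
  qed
  then have "(\<lambda>k. ?low w k (p k)) \<longlonglongrightarrow> 1"
    by (rule tendsto_1_if_gt_1_minus_inverse) (rule run_measure.prob_le_1)
  then have null: "measure (run_measure A w) (runs_ge A w \<eta>) = 0" if "1/2 < \<eta>" for \<eta>
    using that by (rule measure_runs_ge_eq_0_if_low_avg_tendsto_1)
  have "\<not> finite (range p)"
    using strict_mono_imp_inj_on[OF p(1)] finite_imageD by blast
  then have "ereal (1/2) < L_pos A w"
    by (simp add: L w_def L_I_word_of_set)
  then obtain \<eta> where "1/2 < \<eta>" "measure (run_measure A w) (runs_ge A w \<eta>) > 0"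
    by (rule less_L_posE)
  with null show False
    by simp
qed

section \<open>An AsLimAvg automaton computing \<open>L_I\<close>\<close>

definition L_I_automaton :: pwa where
  "L_I_automaton = \<lparr>pwa_states = {0, 1}, pwa_init = pmf_of_set {0, 1},
     pwa_trans = (\<lambda>q \<sigma>. if q = 0 \<and> \<sigma> = a then pmf_of_set {0, 1} else return_pmf q),
     pwa_weight = (\<lambda>q \<sigma> q'. if q = 1 then 1 else 0)\<rparr>"

lemma L_I_automaton_simps:
  "pwa_states L_I_automaton = {0, 1}"
  "pwa_init L_I_automaton = pmf_of_set {0, 1}"
  "pwa_trans L_I_automaton q \<sigma> =
     (if q = 0 \<and> \<sigma> = a then pmf_of_set {0, 1} else return_pmf q)"
  "pwa_weight L_I_automaton q \<sigma> q' = (if q = 1 then 1 else 0)"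
  by (simp_all add: L_I_automaton_def)

lemma wf_L_I_automaton: "wf_pwa L_I_automaton"
  unfolding wf_pwa_def by (auto simp: L_I_automaton_simps)

lemma L_I_automaton_run_state:
  "is_run L_I_automaton w r \<Longrightarrow> r i \<in> {0, 1}"
proof (induction i)
  case 0
  then show ?case
    using is_run_set_pmf(1) by (force simp: L_I_automaton_simps)
next
  case (Suc i)
  then have "r (Suc i) \<in> set_pmf (pwa_trans L_I_automaton (r i) (w i))"
    by (intro is_run_set_pmf(2))
  with Suc show ?case
    by (auto simp: L_I_automaton_simps split: if_splits)
qed

lemma L_I_automaton_run_absorbed:
  assumes "is_run L_I_automaton w r" "r p = 1" "p \<le> i"
  shows "r i = 1"
  using assms(3)
proof (induction i rule: dec_induct)
  case (step n)
  have "r (Suc n) \<in> set_pmf (pwa_trans L_I_automaton (r n) (w n))"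
    using assms(1) by (rule is_run_set_pmf(2))
  with step show ?case
    by (simp add: L_I_automaton_simps)
qed (rule assms(2))

lemma LimAvg_L_I_automaton_run:
  assumes "is_run L_I_automaton w r"
  shows "LimAvg (weight_seq L_I_automaton w r) = (if \<forall>i. r i = 0 then 0 else 1)"
proof (cases "\<forall>i. r i = 0")
  case True
  then show ?thesis
    using LimAvg_eventually_const[of 0 "weight_seq L_I_automaton w r" 0]
    by (simp add: weight_seq_def L_I_automaton_simps)
next
  case False
  then obtain p where "r p = 1"
    using L_I_automaton_run_state[OF assms] by blast
  then have "weight_seq L_I_automaton w r i = 1" if "p \<le> i" for i
    using L_I_automaton_run_absorbed[OF assms _ that]
    by (simp add: weight_seq_def L_I_automaton_simps)
  with False show ?thesis
    using LimAvg_eventually_const[of p "weight_seq L_I_automaton w r" 1] by simp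
qed

definition count_a :: "word \<Rightarrow> nat \<Rightarrow> nat" where
  "count_a w n = card {i. i < n \<and> w i = a}"

lemma count_a_Suc: "count_a w (Suc n) = (if w n = a then Suc (count_a w n) else count_a w n)"
proof -
  have "{i. i < Suc n \<and> w i = a} =
      (if w n = a then insert n {i. i < n \<and> w i = a} else {i. i < n \<and> w i = a})"
    by (auto simp: less_Suc_eq)
  then show ?thesis
    by (simp add: count_a_def)
qed

lemma measure_L_I_automaton_stays_0_upto:
  "measure (run_measure L_I_automaton w) {r. \<forall>i\<le>n. r i = 0} = (1/2) ^ Suc (count_a w n)"
proof -
  have "(\<Prod>i<n. pmf (pwa_trans L_I_automaton 0 (w i)) 0) = (1/2) ^ count_a w n"
  proof (induction n)
    case 0
    show ?case
      by (simp add: count_a_def)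
  next
    case (Suc n)
    then show ?case
      by (simp add: count_a_Suc L_I_automaton_simps)
  qed
  then show ?thesis
    using emeasure_run_measure_cylinder[of L_I_automaton w n "\<lambda>_. 0"]
    by (simp add: measure_def prefix_prob_def L_I_automaton_simps)
qed

lemma LIMSEQ_measure_L_I_automaton_stays_0:
  defines "Z \<equiv> {r. \<forall>i. r i = (0::nat)}"
  shows "(\<lambda>n. (1/2) ^ Suc (count_a w n)) \<longlonglongrightarrow> measure (run_measure L_I_automaton w) Z"
proof -
  have "Z = (\<Inter>n. {r. \<forall>i\<le>n. r i = 0})"
    by (auto simp: Z_def)
  moreover have "(\<lambda>n. measure (run_measure L_I_automaton w) {r. \<forall>i\<le>n. r i = 0})
      \<longlonglongrightarrow> measure (run_measure L_I_automaton w) (\<Inter>n. {r. \<forall>i\<le>n. r i = 0})"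
    by (rule run_measure.finite_Lim_measure_decseq)
       (auto simp: decseq_def sets_run_measure sets_prefix_cylinder)
  ultimately show ?thesis
    by (simp add: measure_L_I_automaton_stays_0_upto)
qed

lemma count_a_eventually_eq_card:
  assumes "finite {i. w i = a}"
  shows "\<forall>\<^sub>F n in sequentially. count_a w n = card {i. w i = a}"
proof -
  obtain N where "{i. w i = a} \<subseteq> {..<N}"
    using finite_nat_bounded[OF assms] ..
  then have "{i. i < n \<and> w i = a} = {i. w i = a}" if "N \<le> n" for n
    using that by auto
  then show ?thesis
    unfolding count_a_def eventually_sequentially by (intro exI[of _ N] allI impI) simp
qed

lemma filterlim_count_a_at_top:
  assumes "infinite {i. w i = a}"
  shows "filterlim (count_a w) at_top sequentially"
  unfolding filterlim_at_top eventually_sequentially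
proof
  fix k
  obtain F where F: "F \<subseteq> {i. w i = a}" "finite F" "card F = k"
    using infinite_arbitrarily_large[OF assms] by blast
  obtain N where N: "F \<subseteq> {..<N}"
    using finite_nat_bounded[OF F(2)] ..
  have "k \<le> count_a w n" if "N \<le> n" for n
    unfolding count_a_def F(3)[symmetric] using F(1) N that by (intro card_mono) auto
  then show "\<exists>N. \<forall>n\<ge>N. k \<le> count_a w n"
    by blast
qed

lemma measure_L_I_automaton_stays_0_eq_0_iff:
  "measure (run_measure L_I_automaton w) {r. \<forall>i. r i = 0} = 0 \<longleftrightarrow> infinite {i. w i = a}"
proof (cases "finite {i. w i = a}")
  case True
  have "\<forall>\<^sub>F n in sequentially. (1/2::real) ^ Suc (card {i. w i = a}) = (1/2) ^ Suc (count_a w n)"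
    using count_a_eventually_eq_card[OF True] by eventually_elim simp
  then have "(\<lambda>n. (1/2::real) ^ Suc (count_a w n)) \<longlonglongrightarrow> (1/2) ^ Suc (card {i. w i = a})"
    by (rule Lim_transform_eventually[OF tendsto_const])
  then have p: "measure (run_measure L_I_automaton w) {r. \<forall>i. r i = 0} =
      (1/2) ^ Suc (card {i. w i = a})"
    using LIMSEQ_measure_L_I_automaton_stays_0 LIMSEQ_unique by blast
  have "0 < measure (run_measure L_I_automaton w) {r. \<forall>i. r i = 0}"
    unfolding p by simp
  with True show ?thesis
    by simp
next
  case False
  have "(\<lambda>n. (1/2::real) ^ Suc (count_a w n)) \<longlonglongrightarrow> 0"
    using filterlim_compose[OF LIMSEQ_power_zero[of "1/2::real"]
        filterlim_Suc[THEN filterlim_compose, OF filterlim_count_a_at_top[OF False]]]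
    by simp
  with False show ?thesis
    using LIMSEQ_measure_L_I_automaton_stays_0 LIMSEQ_unique by blast
qed

lemma measure_runs_ge_L_I_automaton:
  fixes w defines "M \<equiv> run_measure L_I_automaton w" and "Z \<equiv> {r. \<forall>i. r i = (0::nat)}"
  shows "measure M (runs_ge L_I_automaton w \<eta>) =
    (if \<eta> \<le> 0 then 1 else if \<eta> \<le> 1 then 1 - measure M Z else 0)"
proof -
  define S where "S = (if \<eta> \<le> 0 then UNIV else if \<eta> \<le> 1 then UNIV - Z else {})"
  have "AE r in M. r \<in> runs_ge L_I_automaton w \<eta> \<longleftrightarrow> r \<in> S"
    using AE_is_run unfolding M_def
    by eventually_elim (auto simp: runs_ge_def LimAvg_L_I_automaton_run S_def Z_def)
  moreover have "Z \<in> sets M"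
  proof -
    have "Z = (\<Inter>n. {r. \<forall>i\<le>n. r i = 0})"
      by (auto simp: Z_def)
    then show ?thesis
      by (auto simp: M_def sets_run_measure sets_prefix_cylinder)
  qed
  moreover have "UNIV \<in> sets M"
    using sets.top[of M] by (simp add: M_def space_run_measure)
  ultimately have "measure M (runs_ge L_I_automaton w \<eta>) = measure M S"
    by (intro measure_eq_AE) (auto simp: S_def M_def sets_runs_ge)
  also have "\<dots> = (if \<eta> \<le> 0 then 1 else if \<eta> \<le> 1 then 1 - measure M Z else 0)"
    using run_measure.prob_compl[OF \<open>Z \<in> sets M\<close>[unfolded M_def]]
      run_measure.prob_space[of L_I_automaton w]
    by (simp add: S_def M_def space_run_measure)
  finally show ?thesis .
qed

lemma Sup_ereal_atMost: "Sup (ereal ` {\<eta>. \<eta> \<le> c}) = ereal c"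
  by (rule antisym) (auto intro!: Sup_least Sup_upper)

lemma L_I_AsLimAvg: "\<exists>A. wf_pwa A \<and> (\<forall>w. L_as A w = ereal (L_I w))"
proof (intro exI conjI allI)
  fix w
  let ?p = "measure (run_measure L_I_automaton w) {r. \<forall>i. r i = 0}"
  have "{\<eta>. measure (run_measure L_I_automaton w) (runs_ge L_I_automaton w \<eta>) = 1} =
      {\<eta>. \<eta> \<le> (if ?p = 0 then 1 else 0)}"
    by (auto simp: measure_runs_ge_L_I_automaton)
  then show "L_as L_I_automaton w = ereal (L_I w)"
    by (simp add: L_as_def Sup_ereal_atMost measure_L_I_automaton_stays_0_eq_0_iff L_I_def)
qed (rule wf_L_I_automaton)

section \<open>No NLimAvg automaton computes \<open>L_I\<close>\<close>

definition edge :: "pwa \<Rightarrow> nat \<Rightarrow> sigma \<Rightarrow> nat \<Rightarrow> bool" where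
  "edge A q \<sigma> q' \<longleftrightarrow> 0 < pmf (pwa_trans A q \<sigma>) q'"

definition reachable :: "pwa \<Rightarrow> nat \<Rightarrow> bool" where
  "reachable A q \<longleftrightarrow> (\<exists>n u \<rho>. 0 < pmf (pwa_init A) (\<rho> 0) \<and>
     (\<forall>i<n. edge A (\<rho> i) (u i) (\<rho> (Suc i))) \<and> \<rho> n = q)"

definition path :: "pwa \<Rightarrow> sigma \<Rightarrow> (nat \<Rightarrow> nat) \<Rightarrow> nat \<Rightarrow> bool" where
  "path A \<sigma> \<rho> n \<longleftrightarrow> (\<forall>i<n. edge A (\<rho> i) \<sigma> (\<rho> (Suc i)))"

definition path_weight :: "pwa \<Rightarrow> sigma \<Rightarrow> (nat \<Rightarrow> nat) \<Rightarrow> nat \<Rightarrow> real" where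
  "path_weight A \<sigma> \<rho> n = (\<Sum>i<n. real_of_rat (pwa_weight A (\<rho> i) \<sigma> (\<rho> (Suc i))))"

definition max_abs_weight :: "pwa \<Rightarrow> real" where
  "max_abs_weight A = Max (insert 0 ((\<lambda>(q, \<sigma>, q'). \<bar>real_of_rat (pwa_weight A q \<sigma> q')\<bar>) `
     (pwa_states A \<times> {a, b} \<times> pwa_states A)))"

lemma reachable_edge:
  assumes "reachable A q" "edge A q \<sigma> q'"
  shows "reachable A q'"
proof -
  obtain n u \<rho> where \<rho>: "0 < pmf (pwa_init A) (\<rho> 0)" "\<forall>i<n. edge A (\<rho> i) (u i) (\<rho> (Suc i))"
    "\<rho> n = q"
    using assms(1) unfolding reachable_def by blast
  have "\<forall>i<Suc n. edge A ((\<rho>(Suc n := q')) i) ((u(n := \<sigma>)) i) ((\<rho>(Suc n := q')) (Suc i))"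
    using \<rho> assms(2) by (auto simp: less_Suc_eq)
  with \<rho>(1) show ?thesis
    unfolding reachable_def
    by (intro exI[of _ "Suc n"] exI[of _ "u(n := \<sigma>)"] exI[of _ "\<rho>(Suc n := q')"]) simp
qed

lemma reachable_path:
  assumes "reachable A (\<rho> 0)" "path A \<sigma> \<rho> n" "i \<le> n"
  shows "reachable A (\<rho> i)"
  using assms(3)
proof (induction i)
  case (Suc i)
  with assms(2) show ?case
    using reachable_edge[of A "\<rho> i" \<sigma> "\<rho> (Suc i)"] by (simp add: path_def)
qed (rule assms(1))

lemma is_run_reachable: "is_run A w r \<Longrightarrow> reachable A (r i)"
  unfolding reachable_def is_run_def edge_def
  by (intro exI[of _ i] exI[of _ w] exI[of _ r]) auto

lemma reachable_in_states:
  assumes wf: "wf_pwa A" and "reachable A q"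
  shows "q \<in> pwa_states A"
proof -
  obtain n u \<rho> where \<rho>: "0 < pmf (pwa_init A) (\<rho> 0)" "\<forall>i<n. edge A (\<rho> i) (u i) (\<rho> (Suc i))"
    "\<rho> n = q"
    using assms(2) unfolding reachable_def by blast
  have "\<rho> i \<in> pwa_states A" if "i \<le> n" for i
    using that
  proof (induction i)
    case 0
    then show ?case
      using \<rho>(1) wf by (auto simp: wf_pwa_def set_pmf_eq')
  next
    case (Suc i)
    then have "\<rho> (Suc i) \<in> set_pmf (pwa_trans A (\<rho> i) (u i))"
      using \<rho>(2) by (auto simp: edge_def set_pmf_eq')
    with Suc wf show ?case
      by (auto simp: wf_pwa_def)
  qed
  with \<rho>(3) show ?thesis
    by blast
qed

lemma max_abs_weight_nonneg: "wf_pwa A \<Longrightarrow> 0 \<le> max_abs_weight A"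
  unfolding max_abs_weight_def wf_pwa_def by (intro Max_ge) auto

lemma abs_weight_le_max_abs_weight:
  assumes "wf_pwa A" "q \<in> pwa_states A" "q' \<in> pwa_states A"
  shows "\<bar>real_of_rat (pwa_weight A q \<sigma> q')\<bar> \<le> max_abs_weight A"
proof -
  have "(q, \<sigma>, q') \<in> pwa_states A \<times> {a, b} \<times> pwa_states A"
    using assms by (cases \<sigma>) auto
  then have "\<bar>real_of_rat (pwa_weight A q \<sigma> q')\<bar> \<in>
      (\<lambda>(q, \<sigma>, q'). \<bar>real_of_rat (pwa_weight A q \<sigma> q')\<bar>) ` (pwa_states A \<times> {a, b} \<times> pwa_states A)"
    by (rule rev_image_eqI) simp
  moreover have "finite (pwa_states A)"
    using assms(1) by (simp add: wf_pwa_def)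
  ultimately show ?thesis
    unfolding max_abs_weight_def by (intro Max_ge) auto
qed

lemma abs_weight_seq_le:
  assumes "wf_pwa A" "is_run A w r"
  shows "\<bar>weight_seq A w r i\<bar> \<le> max_abs_weight A"
  unfolding weight_seq_def using assms
  by (intro abs_weight_le_max_abs_weight reachable_in_states is_run_reachable)

lemma pigeonhole_repeat:
  assumes "finite Q" "\<And>i. i \<le> card Q \<Longrightarrow> \<rho> i \<in> Q"
  obtains s d where "0 < d" "s + d \<le> card Q" "\<rho> (s + d) = \<rho> s"
proof -
  have "\<not> inj_on \<rho> {..card Q}"
    using card_inj_on_le[of \<rho> "{..card Q}" Q] assms by auto
  then obtain s t where "s < t" "t \<le> card Q" "\<rho> s = \<rho> t"
    unfolding inj_on_def by (metis atMost_iff linorder_neqE_nat)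
  then show ?thesis
    by (intro that[where s = s and d = "t - s"]) auto
qed

lemma path_remove_cycle:
  assumes path: "path A \<sigma> \<rho> n" and "s + d \<le> n" and cycle: "\<rho> (s + d) = \<rho> s"
  defines "\<rho>' \<equiv> \<lambda>i. if i < s then \<rho> i else \<rho> (i + d)"
  shows "path A \<sigma> \<rho>' (n - d)"
    and "path_weight A \<sigma> \<rho> n = path_weight A \<sigma> (\<lambda>j. \<rho> (s + j)) d + path_weight A \<sigma> \<rho>' (n - d)"
proof -
  have below: "\<rho>' i = \<rho> i \<and> \<rho>' (Suc i) = \<rho> (Suc i)" if "i < s" for i
    using that cycle by (cases "Suc i = s") (auto simp: \<rho>'_def)
  have above: "\<rho>' i = \<rho> (i + d) \<and> \<rho>' (Suc i) = \<rho> (Suc i + d)" if "s \<le> i" for i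
    using that by (simp add: \<rho>'_def)
  show "path A \<sigma> \<rho>' (n - d)"
    unfolding path_def
  proof (intro allI impI)
    fix i assume "i < n - d"
    show "edge A (\<rho>' i) \<sigma> (\<rho>' (Suc i))"
    proof (cases "i < s")
      case True
      with \<open>i < n - d\<close> show ?thesis
        using path below by (simp add: path_def)
    next
      case False
      with \<open>i < n - d\<close> show ?thesis
        using path[unfolded path_def, rule_format, of "i + d"] above by simp
    qed
  qed
  let ?e = "\<lambda>\<rho> i. real_of_rat (pwa_weight A (\<rho> i) \<sigma> (\<rho> (Suc i)))"
  have "path_weight A \<sigma> \<rho> n =
      (\<Sum>i\<in>{0..<s}. ?e \<rho> i) + (\<Sum>i\<in>{s..<s + d}. ?e \<rho> i) + (\<Sum>i\<in>{s + d..<n}. ?e \<rho> i)"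
    unfolding path_weight_def lessThan_atLeast0 using \<open>s + d \<le> n\<close>
    by (simp add: sum.atLeastLessThan_concat)
  also have "(\<Sum>i\<in>{s..<s + d}. ?e \<rho> i) = path_weight A \<sigma> (\<lambda>j. \<rho> (s + j)) d"
    unfolding path_weight_def lessThan_atLeast0
    using sum.shift_bounds_nat_ivl[of "?e \<rho>" 0 s d] by (simp add: add.commute)
  also have "(\<Sum>i\<in>{s + d..<n}. ?e \<rho> i) = (\<Sum>i\<in>{s..<n - d}. ?e \<rho>' i)"
    using sum.shift_bounds_nat_ivl[of "?e \<rho>" s d "n - d"] \<open>s + d \<le> n\<close> above
    by (simp add: add.commute)
  also have "(\<Sum>i\<in>{0..<s}. ?e \<rho> i) = (\<Sum>i\<in>{0..<s}. ?e \<rho>' i)"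
    using below by simp
  also have "(\<Sum>i\<in>{0..<s}. ?e \<rho>' i) + path_weight A \<sigma> (\<lambda>j. \<rho> (s + j)) d +
      (\<Sum>i\<in>{s..<n - d}. ?e \<rho>' i) =
      path_weight A \<sigma> (\<lambda>j. \<rho> (s + j)) d + path_weight A \<sigma> \<rho>' (n - d)"
    unfolding path_weight_def lessThan_atLeast0 using \<open>s + d \<le> n\<close>
    by (simp add: sum.atLeastLessThan_concat[symmetric, of 0 s "n - d"])
  finally show "path_weight A \<sigma> \<rho> n =
      path_weight A \<sigma> (\<lambda>j. \<rho> (s + j)) d + path_weight A \<sigma> \<rho>' (n - d)" .
qed

lemma path_weight_le_if_nonpos_cycles:
  assumes wf: "wf_pwa A"
    and cycles: "\<And>c L. reachable A (c 0) \<Longrightarrow> c L = c 0 \<Longrightarrow> path A \<sigma> c L \<Longrightarrow>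
      path_weight A \<sigma> c L \<le> 0"
  shows "reachable A (\<rho> 0) \<Longrightarrow> path A \<sigma> \<rho> n \<Longrightarrow>
    path_weight A \<sigma> \<rho> n \<le> real (card (pwa_states A)) * max_abs_weight A"
proof (induction n arbitrary: \<rho> rule: less_induct)
  case (less n)
  let ?Q = "pwa_states A"
  have in_Q: "\<rho> i \<in> ?Q" if "i \<le> n" for i
    using reachable_in_states[OF wf reachable_path[OF less.prems that]] .
  show ?case
  proof (cases "n \<le> card ?Q")
    case True
    have "path_weight A \<sigma> \<rho> n \<le> (\<Sum>i<n. max_abs_weight A)"
      unfolding path_weight_def
    proof (rule sum_mono)
      fix i assume "i \<in> {..<n}"
      then have "i \<le> n" "Suc i \<le> n"
        by auto
      then show "real_of_rat (pwa_weight A (\<rho> i) \<sigma> (\<rho> (Suc i))) \<le> max_abs_weight A"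
        using abs_weight_le_max_abs_weight[OF wf in_Q in_Q] abs_ge_self order_trans by metis
    qed
    also have "\<dots> \<le> real (card ?Q) * max_abs_weight A"
      using True max_abs_weight_nonneg[OF wf] by (simp add: mult_right_mono)
    finally show ?thesis .
  next
    case False
    have "finite ?Q"
      using wf by (simp add: wf_pwa_def)
    moreover have "\<rho> i \<in> ?Q" if "i \<le> card ?Q" for i
      using False that in_Q by simp
    ultimately obtain s d where d: "0 < d" "s + d \<le> card ?Q" "\<rho> (s + d) = \<rho> s"
      by (rule pigeonhole_repeat)
    define \<rho>' where "\<rho>' i = (if i < s then \<rho> i else \<rho> (i + d))" for i
    have "s + d \<le> n"
      using d False by simp
    note removed = path_remove_cycle[OF less.prems(2) this d(3), folded \<rho>'_def]
    have "path_weight A \<sigma> (\<lambda>j. \<rho> (s + j)) d \<le> 0"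
      using d less.prems(2) reachable_path[OF less.prems, of s] \<open>s + d \<le> n\<close>
      by (intro cycles) (auto simp: path_def)
    moreover have "path_weight A \<sigma> \<rho>' (n - d) \<le> real (card ?Q) * max_abs_weight A"
      using d less.prems(1) removed(1) \<open>s + d \<le> n\<close>
      by (intro less.IH) (auto simp: \<rho>'_def)
    ultimately show ?thesis
      using removed(2) by simp
  qed
qed

lemma reachable_positive_cycle_pumps:
  assumes reach: "reachable A (c 0)" and cycle: "c L = c 0" "path A b c L"
    and pos: "0 < path_weight A b c L"
  obtains w r where "finite {i. w i = a}" "is_run A w r" "0 < LimAvg (weight_seq A w r)"
proof -
  have L: "0 < L"
    using pos by (cases L) (auto simp: path_weight_def)
  obtain n u \<rho> where \<rho>: "0 < pmf (pwa_init A) (\<rho> 0)" "\<forall>i<n. edge A (\<rho> i) (u i) (\<rho> (Suc i))"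
    "\<rho> n = c 0"
    using reach unfolding reachable_def by blast
  define w where "w i = (if i < n then u i else b)" for i
  define r where "r i = (if i < n then \<rho> i else c ((i - n) mod L))" for i
  have c_Suc_mod: "c (Suc k mod L) = c (Suc (k mod L))" for k
    using cycle(1) L by (simp add: mod_Suc)
  have "finite {i. w i = a}"
    by (rule finite_subset[of _ "{..<n}"]) (auto simp: w_def)
  moreover have "is_run A w r"
    unfolding is_run_def
  proof (intro conjI allI)
    show "0 < pmf (pwa_init A) (r 0)"
      using \<rho> by (cases "n = 0") (auto simp: r_def)
    fix i
    show "0 < pmf (pwa_trans A (r i) (w i)) (r (Suc i))"
    proof (cases "i < n")
      case True
      then have "r (Suc i) = \<rho> (Suc i)"
        using \<rho>(3) by (cases "Suc i = n") (auto simp: r_def)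
      with True \<rho>(2) show ?thesis
        by (auto simp: r_def w_def edge_def)
    next
      case False
      then have "r (Suc i) = c (Suc ((i - n) mod L))"
        by (simp add: r_def Suc_diff_le c_Suc_mod)
      with False cycle(2) L show ?thesis
        by (auto simp: r_def w_def path_def edge_def)
    qed
  qed
  moreover have "0 < LimAvg (weight_seq A w r)"
  proof -
    define g where "g j = real_of_rat (pwa_weight A (c j) b (c (Suc j)))" for j
    have "weight_seq A w r (n + k) = g (k mod L)" for k
      using c_Suc_mod[of k] by (simp add: weight_seq_def w_def r_def g_def)
    then have "ereal ((\<Sum>j<L. g j) / real L) \<le> LimAvg (weight_seq A w r)"
      by (rule LimAvg_ge_eventually_periodic[OF L])
    moreover have "0 < ereal ((\<Sum>j<L. g j) / real L)"
      using pos L by (simp add: path_weight_def g_def)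
    ultimately show ?thesis
      by (rule less_le_trans[rotated])
  qed
  ultimately show ?thesis
    by (rule that)
qed

lemma reachable_b_cycle_nonpos:
  assumes finite_a: "\<And>w. finite {i. w i = a} \<Longrightarrow> L_max A w \<le> 0"
    and cycle: "reachable A (c 0)" "c n = c 0" "path A b c n"
  shows "path_weight A b c n \<le> 0"
proof (rule ccontr)
  assume "\<not> path_weight A b c n \<le> 0"
  then have "0 < path_weight A b c n"
    by simp
  then obtain w r where w: "finite {i. w i = a}" and r: "is_run A w r"
    and pos: "0 < LimAvg (weight_seq A w r)"
    by (rule reachable_positive_cycle_pumps[OF cycle])
  have "LimAvg (weight_seq A w r) \<le> L_max A w"
    unfolding L_max_def using r by (blast intro: Sup_upper)
  with finite_a[OF w] pos show False
    by simp
qed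

lemma sum_weight_seq_le_if_b_block:
  assumes wf: "wf_pwa A" and run: "is_run A w r"
    and paths: "\<And>\<rho> n. reachable A (\<rho> 0) \<Longrightarrow> path A b \<rho> n \<Longrightarrow> path_weight A b \<rho> n \<le> K"
    and "F < F'" and block: "\<And>i. F < i \<Longrightarrow> i < F' \<Longrightarrow> w i = b"
  shows "(\<Sum>i<F'. weight_seq A w r i) \<le> real (Suc F) * max_abs_weight A + K"
proof -
  define \<rho> where "\<rho> j = r (Suc F + j)" for j
  have "(\<Sum>i<F'. weight_seq A w r i) =
      (\<Sum>i\<in>{0..<Suc F}. weight_seq A w r i) + (\<Sum>i\<in>{Suc F..<F'}. weight_seq A w r i)"
    unfolding lessThan_atLeast0 using \<open>F < F'\<close> by (intro sum.atLeastLessThan_concat[symmetric]) auto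
  also have "(\<Sum>i\<in>{0..<Suc F}. weight_seq A w r i) \<le> real (Suc F) * max_abs_weight A"
    using sum_bounded_above[of "{0..<Suc F}" "weight_seq A w r" "max_abs_weight A"]
      abs_weight_seq_le[OF wf run] abs_le_D1 by auto
  also have "(\<Sum>i\<in>{Suc F..<F'}. weight_seq A w r i) = path_weight A b \<rho> (F' - Suc F)"
  proof -
    have "(\<Sum>i\<in>{Suc F..<F'}. weight_seq A w r i) =
        (\<Sum>j\<in>{0..<F' - Suc F}. weight_seq A w r (j + Suc F))"
      using sum.shift_bounds_nat_ivl[of "weight_seq A w r" 0 "Suc F" "F' - Suc F"] \<open>F < F'\<close>
      by simp
    also have "\<dots> = path_weight A b \<rho> (F' - Suc F)"
      unfolding path_weight_def lessThan_atLeast0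
      by (intro sum.cong refl) (simp add: weight_seq_def \<rho>_def block add.commute)
    finally show ?thesis .
  qed
  also have "path_weight A b \<rho> (F' - Suc F) \<le> K"
  proof (rule paths)
    show "reachable A (\<rho> 0)"
      unfolding \<rho>_def by (rule is_run_reachable[OF run])
    show "path A b \<rho> (F' - Suc F)"
      unfolding path_def
    proof (intro allI impI)
      fix j assume "j < F' - Suc F"
      then have "w (Suc F + j) = b"
        by (intro block) auto
      with run[unfolded is_run_def] show "edge A (\<rho> j) b (\<rho> (Suc j))"
        unfolding edge_def \<rho>_def by (metis add_Suc_right)
    qed
  qed
  finally show ?thesis
    by simp
qed

lemma word_of_set_range_fact_eq_b:
  assumes "fact k < i" "i < fact (Suc k)"
  shows "word_of_set (range fact) i = b"
proof -
  have "i \<noteq> fact j" for j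
  proof (cases "j \<le> k")
    case True
    then have "(fact j :: nat) \<le> fact k"
      by (rule fact_mono)
    with assms show ?thesis by simp
  next
    case False
    then have "(fact (Suc k) :: nat) \<le> fact j"
      by (intro fact_mono) simp
    with assms show ?thesis by simp
  qed
  then show ?thesis
    by (auto simp: word_of_set_def)
qed

lemma avg_weight_seq_fact_le:
  assumes wf: "wf_pwa A" and "0 \<le> K" "1 \<le> k"
    and paths: "\<And>\<rho> n. reachable A (\<rho> 0) \<Longrightarrow> path A b \<rho> n \<Longrightarrow> path_weight A b \<rho> n \<le> K"
    and run: "is_run A (word_of_set (range fact)) r"
  shows "avg (weight_seq A (word_of_set (range fact)) r) (fact (Suc k))
    \<le> (2 * max_abs_weight A + K) / real (Suc k)"
proof -
  let ?w = "word_of_set (range fact)" and ?W = "max_abs_weight A"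
  define F :: nat where "F = fact k"
  have F: "1 \<le> F" "fact (Suc k) = Suc k * F"
    by (simp_all add: F_def)
  have "(\<Sum>i<fact (Suc k). weight_seq A ?w r i) \<le> real (Suc F) * ?W + K"
    using \<open>1 \<le> k\<close> F by (intro sum_weight_seq_le_if_b_block[OF wf run paths])
      (auto simp: F_def intro: word_of_set_range_fact_eq_b)
  also have "\<dots> \<le> real F * (2 * ?W + K)"
  proof -
    have "real (Suc F) * ?W \<le> (2 * real F) * ?W"
      using F(1) max_abs_weight_nonneg[OF wf] by (intro mult_right_mono) auto
    moreover have "K \<le> real F * K"
      using F(1) \<open>0 \<le> K\<close> by (simp add: mult_le_cancel_right1)
    ultimately show ?thesis
      by (simp add: distrib_left)
  qed
  finally have "avg (weight_seq A ?w r) (fact (Suc k)) \<le> real F * (2 * ?W + K) / real (Suc k * F)"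
    unfolding avg_def F(2) by (rule divide_right_mono) simp
  also have "\<dots> = (2 * ?W + K) / real (Suc k)"
    unfolding of_nat_mult using F(1)
    by (subst mult.commute) (rule nonzero_mult_divide_mult_cancel_left; simp)
  finally show ?thesis .
qed

lemma LimAvg_fact_word_le_0:
  assumes wf: "wf_pwa A" and "0 \<le> K"
    and paths: "\<And>\<rho> n. reachable A (\<rho> 0) \<Longrightarrow> path A b \<rho> n \<Longrightarrow> path_weight A b \<rho> n \<le> K"
    and run: "is_run A (word_of_set (range fact)) r"
  shows "LimAvg (weight_seq A (word_of_set (range fact)) r) \<le> 0"
proof -
  let ?u = "\<lambda>n. ereal (avg (weight_seq A (word_of_set (range fact)) r) n)"
  let ?C = "2 * max_abs_weight A + K"
  have "strict_mono (\<lambda>k. fact (Suc k) :: nat)"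
    unfolding strict_mono_Suc_iff by (intro allI fact_less_mono_nat) auto
  then have "LimAvg (weight_seq A (word_of_set (range fact)) r) \<le> liminf (?u \<circ> (\<lambda>k. fact (Suc k)))"
    unfolding LimAvg_eq_liminf_avg by (rule liminf_subseq_mono)
  also have "\<dots> \<le> liminf (\<lambda>k. ereal (?C / real (Suc k)))"
  proof (rule Liminf_mono)
    show "\<forall>\<^sub>F k in sequentially. (?u \<circ> (\<lambda>k. fact (Suc k))) k \<le> ereal (?C / real (Suc k))"
      unfolding eventually_sequentially
      using avg_weight_seq_fact_le[OF wf \<open>0 \<le> K\<close> _ paths run] by auto
  qed
  also have "\<dots> = 0"
  proof -
    have "(\<lambda>k. ?C / real (Suc k)) \<longlonglongrightarrow> 0"
      by (rule LIMSEQ_Suc[OF lim_const_over_n])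
    then show ?thesis
      by (simp add: lim_imp_Liminf tendsto_ereal zero_ereal_def)
  qed
  finally show ?thesis .
qed

lemma L_I_not_NLimAvg: "\<not> (\<exists>A. wf_pwa A \<and> (\<forall>w. L_max A w = ereal (L_I w)))"
proof
  assume "\<exists>A. wf_pwa A \<and> (\<forall>w. L_max A w = ereal (L_I w))"
  then obtain A where wf: "wf_pwa A" and L: "\<And>w. L_max A w = ereal (L_I w)" by blast
  have "L_max A w \<le> 0" if "finite {i. w i = a}" for w
    using that by (simp add: L L_I_def)
  then have cycles: "path_weight A b c n \<le> 0"
    if "reachable A (c 0)" "c n = c 0" "path A b c n" for c n
    using reachable_b_cycle_nonpos that by blast
  define K where "K = real (card (pwa_states A)) * max_abs_weight A"
  have "0 \<le> K"
    by (simp add: K_def max_abs_weight_nonneg[OF wf])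
  have paths: "path_weight A b \<rho> n \<le> K" if "reachable A (\<rho> 0)" "path A b \<rho> n" for \<rho> n
    unfolding K_def using path_weight_le_if_nonpos_cycles[OF wf cycles that] .
  have "L_max A (word_of_set (range fact)) \<le> 0"
    unfolding L_max_def
    by (rule Sup_least) (auto intro: LimAvg_fact_word_le_0[OF wf \<open>0 \<le> K\<close> paths])
  moreover have "\<not> finite (range (fact :: nat \<Rightarrow> nat))"
    unfolding infinite_nat_iff_unbounded_le by (blast intro: fact_ge_self)
  ultimately show False
    by (simp add: L L_I_word_of_set)
qed

theorem lemma3:
  shows "(\<not> (\<exists>A. wf_pwa A \<and> (\<forall>w. L_max A w = ereal (L_I w)))) \<and>
         (\<not> (\<exists>A. wf_pwa A \<and> (\<forall>w. L_pos A w = ereal (L_I w)))) \<and>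
         (\<exists>A. wf_pwa A \<and> (\<forall>w. L_as A w = ereal (L_I w)))"
  using L_I_not_NLimAvg L_I_not_PosLimAvg L_I_AsLimAvg by blast

end
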